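(* (1) For disjoint finite sets $X,Y$, $f\in\mathrm{Bool}(X)$, $g\in\mathrm{Bool}(Y)$: $f\star_1g$ is rigid iff $f$ and $g$ are rigid. (2) If $f\in\mathrm{Bool}(X)$ is rigid then $f_{\mid Y}$ is rigid for every $Y\subseteq X$. (3) If $f\in\mathrm{Bool}(X)$ is rigid and $\sim\in\mathcal{E}^W(f)$, then $f/{\sim}$ is rigid.
   Context: A boolean function on a finite set $X$ is a map $f:\mathcal{P}(X)\to\mathbb{Z}$ with $f(\emptyset)=0$; $\mathrm{Bool}(X)$ is their set; $f_{\mid Y}$ is the restriction to $\mathcal{P}(Y)$. For disjoint $X,Y$, $(f\star_1g)(A)=f(A\cap X)+g(A\cap Y)$ (associative, commutative, unit $1\in\mathrm{Bool}(\emptyset)$). For nonempty $X$, $f$ is indecomposable if $f=f'\star_1f''$ with $f'\in\mathrm{Bool}(X\setminus Y)$, $f''\in\mathrm{Bool}(Y)$ forces $Y\in\{\emptyset,X\}$. Each $f$ determines a unique equivalence $\sim_f^i$ with $f=\prod^{\star_1}_{Y\in X/\sim_f^i}f_{\mid Y}$ and each $f_{\mid Y}$ indecomposable; its classes are the indecomposable components of $f$ and $\mathrm{ic}(f)$ is their number. For an equivalence $\sim$: $\mathrm{cl}(\sim)=|X/{\sim}|$, $\varpi_\sim$ the canonical surjection, $f/{\sim}(A)=f(\varpi_\sim^{-1}(A))$, $(f\mid\sim)(A)=\sum_{Y\in X/\sim}f(A\cap Y)$; $\mathcal{E}^W(f)=\{\sim:\mathrm{ic}(f\mid\sim)=\mathrm{cl}(\sim)\}$.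 An indecomposable $f$ is rigid if for all disjoint $A,B\subseteq X$ with $f(A\sqcup B)=f(A)+f(B)$, one has $f(A'\sqcup B')=f(A')+f(B')$ for all $A'\subseteq A$, $B'\subseteq B$; a general $f$ is rigid if $f_{\mid Y}$ is rigid for each indecomposable component $Y$. *)

theory Defs
  imports Main
begin

text \<open>A boolean function on a finite set X is represented as a map f :: 'a set \<Rightarrow> int
  with f {} = 0; for uniqueness of representation we require f A = 0 whenever A is not a
  subset of X (so f is determined by its values on Pow X).\<close>

definition Bool :: "'a set \<Rightarrow> ('a set \<Rightarrow> int) \<Rightarrow> bool" where
  "Bool X f \<longleftrightarrow> f {} = 0 \<and> (\<forall>A. \<not> A \<subseteq> X \<longrightarrow> f A = 0)"

definition restr :: "('a set \<Rightarrow> int) \<Rightarrow> 'a set \<Rightarrow> ('a set \<Rightarrow> int)" where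
  "restr f Y = (\<lambda>A. if A \<subseteq> Y then f A else 0)"

definition star1 :: "'a set \<Rightarrow> 'a set \<Rightarrow> ('a set \<Rightarrow> int) \<Rightarrow> ('a set \<Rightarrow> int) \<Rightarrow> ('a set \<Rightarrow> int)" where
  "star1 X Y f g = (\<lambda>A. if A \<subseteq> X \<union> Y then f (A \<inter> X) + g (A \<inter> Y) else 0)"

definition indecomposable :: "'a set \<Rightarrow> ('a set \<Rightarrow> int) \<Rightarrow> bool" where
  "indecomposable X f \<longleftrightarrow> X \<noteq> {} \<and>
     (\<forall>Y f' f''. Y \<subseteq> X \<and> Bool (X - Y) f' \<and> Bool Y f'' \<and> f = star1 (X - Y) Y f' f''
        \<longrightarrow> Y = {} \<or> Y = X)"

text \<open>The equivalence \<sim>_f^i: the unique equivalence on X such that f is the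
  \<star>_1-product of its restrictions to the classes, each of them indecomposable.
  (The iterated \<star>_1-product over the classes, evaluated at A \<subseteq> X, is the sum
  of f(A \<inter> Y) over the classes Y.)\<close>
definition ic_rel :: "'a set \<Rightarrow> ('a set \<Rightarrow> int) \<Rightarrow> 'a rel" where
  "ic_rel X f = (THE r. equiv X r \<and>
      (\<forall>A. A \<subseteq> X \<longrightarrow> f A = (\<Sum>Y\<in>X // r. f (A \<inter> Y))) \<and>
      (\<forall>Y\<in>X // r. indecomposable Y (restr f Y)))"

definition ic_components :: "'a set \<Rightarrow> ('a set \<Rightarrow> int) \<Rightarrow> 'a set set" where
  "ic_components X f = X // ic_rel X f"

definition ic :: "'a set \<Rightarrow> ('a set \<Rightarrow> int) \<Rightarrow> nat" where
  "ic X f = card (ic_components X f)"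

definition cl :: "'a set \<Rightarrow> 'a rel \<Rightarrow> nat" where
  "cl X r = card (X // r)"

text \<open>f/\<sim>, a boolean function on X/\<sim>: (f/\<sim>)(A) = f(\<varpi>^{-1}(A)) = f(\<Union>A).\<close>
definition quot_fun :: "'a set \<Rightarrow> ('a set \<Rightarrow> int) \<Rightarrow> 'a rel \<Rightarrow> ('a set set \<Rightarrow> int)" where
  "quot_fun X f r = (\<lambda>A. if A \<subseteq> X // r then f (\<Union>A) else 0)"

definition bar_fun :: "'a set \<Rightarrow> ('a set \<Rightarrow> int) \<Rightarrow> 'a rel \<Rightarrow> ('a set \<Rightarrow> int)" where
  "bar_fun X f r = (\<lambda>A. if A \<subseteq> X then (\<Sum>Y\<in>X // r. f (A \<inter> Y)) else 0)"

definition EW :: "'a set \<Rightarrow> ('a set \<Rightarrow> int) \<Rightarrow> 'a rel set" where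
  "EW X f = {r. equiv X r \<and> ic X (bar_fun X f r) = cl X r}"

definition rigid_indec :: "'a set \<Rightarrow> ('a set \<Rightarrow> int) \<Rightarrow> bool" where
  "rigid_indec X f \<longleftrightarrow>
     (\<forall>A B. A \<subseteq> X \<and> B \<subseteq> X \<and> A \<inter> B = {} \<and> f (A \<union> B) = f A + f B \<longrightarrow>
        (\<forall>A' B'. A' \<subseteq> A \<and> B' \<subseteq> B \<longrightarrow> f (A' \<union> B') = f A' + f B'))"

definition rigid :: "'a set \<Rightarrow> ('a set \<Rightarrow> int) \<Rightarrow> bool" where
  "rigid X f \<longleftrightarrow> (\<forall>Y\<in>ic_components X f. rigid_indec Y (restr f Y))"

end

theory Submission
  imports Defs "HOL-Library.Disjoint_Sets"
begin

(* Call S \<subseteq> X a separator of f if f A = f (A \<inter> S) + f (A - S) for all A \<subseteq> X.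
  Separators are closed under intersection and complement, so the minimal nonempty ones, the
  atoms, partition X; they are exactly the indecomposable components of f, and f is rigid iff it
  is rigid on each atom.
  (1) A separator S splits the atoms of f into those of f on S and those of f on X - S, and X
  separates f \<star>_1 g. (2) Each atom of f on Y lies in an atom of f.
  (3) The atoms of f|\<sim> refine the classes of \<sim>, so ic(f|\<sim>) = cl(\<sim>) makes them equal.
  Every separator of f also separates f|\<sim>, hence is a union of classes; so an atom of f/\<sim>
  consists of classes inside a single atom of f, on which f is rigid. *)

lemma partition_on_eqI:
  assumes P: "partition_on X P" and Q: "partition_on X Q" and "P \<subseteq> Q" shows "P = Q"
proof
  show "Q \<subseteq> P"
  proof
    fix q assume "q \<in> Q"
    then obtain x where "x \<in> q" using partition_onD3[OF Q] by (metis ex_in_conv)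
    then obtain p where "p \<in> P" "x \<in> p"
      using partition_onD1[OF P] partition_onD1[OF Q] \<open>q \<in> Q\<close> by blast
    then have "p = q" using disjointD[OF partition_onD2[OF Q]] \<open>P \<subseteq> Q\<close> \<open>q \<in> Q\<close> \<open>x \<in> q\<close> by blast
    then show "q \<in> P" using \<open>p \<in> P\<close> by simp
  qed
qed (rule \<open>P \<subseteq> Q\<close>)

lemma equiv_eq_rel_of_quotient:
  assumes r: "equiv X r" shows "r = {(x, y). \<exists>Y\<in>X//r. x \<in> Y \<and> y \<in> Y}"
proof (intro set_eqI iffI; clarify)
  fix x y assume "(x, y) \<in> r"
  moreover have "x \<in> X" using equiv_type[OF r] \<open>(x, y) \<in> r\<close> by blast
  ultimately show "\<exists>Y\<in>X//r. x \<in> Y \<and> y \<in> Y"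
    using equiv_class_self[OF r] quotientI[of x X r] by blast
next
  fix x y Y assume "Y \<in> X//r" "x \<in> Y" "y \<in> Y"
  then show "(x, y) \<in> r" using in_quotient_imp_in_rel[OF r] by blast
qed

lemma equiv_eq_if_refines_card_eq:
  assumes "finite A" and R: "equiv A R" and S: "equiv A S" and "R \<subseteq> S"
    and card: "card (A//S) = card (A//R)"
  shows "R = S"
proof
  have inj: "inj_on (\<lambda>E. S``E) (A//R)"
  proof (rule eq_card_imp_inj_on)
    show "finite (A//R)" using finite_quotient[OF \<open>finite A\<close> equiv_type[OF R]] .
    show "card ((\<lambda>E. S``E) ` (A//R)) = card (A//R)"
      using refines_equiv_image_eq[OF \<open>R \<subseteq> S\<close> R S] card by simp
  qed
  show "S \<subseteq> R"
  proof clarify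
    fix x y assume "(x, y) \<in> S"
    then have "x \<in> A" "y \<in> A" using equiv_type[OF S] by blast+
    have "S``(R``{x}) = S``(R``{y})"
      using refines_equiv_class_eq2[OF \<open>R \<subseteq> S\<close> R S] equiv_class_eq[OF S \<open>(x, y) \<in> S\<close>] by simp
    then have "R``{x} = R``{y}"
      using inj_onD[OF inj _ quotientI[OF \<open>x \<in> A\<close>] quotientI[OF \<open>y \<in> A\<close>]] by simp
    then show "(x, y) \<in> R" using eq_equiv_class_iff[OF R \<open>x \<in> A\<close> \<open>y \<in> A\<close>] by simp
  qed
qed (rule \<open>R \<subseteq> S\<close>)

section \<open>Separators and atoms\<close>

definition separator :: "'a set \<Rightarrow> ('a set \<Rightarrow> int) \<Rightarrow> 'a set \<Rightarrow> bool" where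
  "separator X f S \<longleftrightarrow> S \<subseteq> X \<and> (\<forall>A\<subseteq>X. f A = f (A \<inter> S) + f (A - S))"

definition atoms :: "'a set \<Rightarrow> ('a set \<Rightarrow> int) \<Rightarrow> 'a set set" where
  "atoms X f = {C. C \<noteq> {} \<and> separator X f C \<and> (\<forall>T. separator X f T \<and> T \<subseteq> C \<longrightarrow> T = {} \<or> T = C)}"

lemma separator_subset: "separator X f S \<Longrightarrow> S \<subseteq> X"
  unfolding separator_def by blast

lemma separatorD: "separator X f S \<Longrightarrow> A \<subseteq> X \<Longrightarrow> f A = f (A \<inter> S) + f (A - S)"
  unfolding separator_def by blast

lemma separatorI: "S \<subseteq> X \<Longrightarrow> (\<And>A. A \<subseteq> X \<Longrightarrow> f A = f (A \<inter> S) + f (A - S)) \<Longrightarrow> separator X f S"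
  unfolding separator_def by blast

lemma separator_Int:
  assumes S: "separator X f S" and T: "separator X f T"
  shows "separator X f (S \<inter> T)"
proof (rule separatorI)
  show "S \<inter> T \<subseteq> X" using separator_subset[OF S] by blast
  fix A assume A: "A \<subseteq> X"
  have "A \<inter> S \<subseteq> X" "A - S \<inter> T \<subseteq> X" using A by blast+
  then have "f (A \<inter> S) = f (A \<inter> S \<inter> T) + f (A \<inter> S - T)"
    and "f (A - S \<inter> T) = f ((A - S \<inter> T) \<inter> S) + f (A - S \<inter> T - S)"
    using separatorD[OF T] separatorD[OF S] by blast+
  moreover have "(A - S \<inter> T) \<inter> S = A \<inter> S - T" "A - S \<inter> T - S = A - S" "A \<inter> S \<inter> T = A \<inter> (S \<inter> T)"
    by blast+
  ultimately show "f A = f (A \<inter> (S \<inter> T)) + f (A - S \<inter> T)"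
    using separatorD[OF S A] by simp
qed

lemma separator_Diff:
  assumes S: "separator X f S" shows "separator X f (X - S)"
proof (rule separatorI)
  fix A assume "A \<subseteq> X"
  moreover have "A \<inter> (X - S) = A - S" "A - (X - S) = A \<inter> S" using \<open>A \<subseteq> X\<close> by blast+
  ultimately show "f A = f (A \<inter> (X - S)) + f (A - (X - S))" using separatorD[OF S] by simp
qed simp

lemma separator_top:
  assumes "f {} = 0" shows "separator X f X"
proof (rule separatorI)
  fix A assume "A \<subseteq> X"
  then have "A \<inter> X = A" "A - X = {}" by blast+
  then show "f A = f (A \<inter> X) + f (A - X)" using assms by (metis add.right_neutral)
qed simp

lemma separator_restrict:
  assumes S: "separator X f S" and "Y \<subseteq> X" shows "separator Y f (S \<inter> Y)"
proof (rule separatorI)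
  fix A assume "A \<subseteq> Y"
  moreover have "A \<inter> (S \<inter> Y) = A \<inter> S" "A - S \<inter> Y = A - S" using \<open>A \<subseteq> Y\<close> by blast+
  ultimately show "f A = f (A \<inter> (S \<inter> Y)) + f (A - S \<inter> Y)"
    using separatorD[OF S] \<open>Y \<subseteq> X\<close> by auto
qed simp

lemma separator_trans:
  assumes T: "separator S f T" and S: "separator X f S" shows "separator X f T"
proof (rule separatorI)
  have "T \<subseteq> S" "S \<subseteq> X" using separator_subset T S by blast+
  then show "T \<subseteq> X" by blast
  fix A assume A: "A \<subseteq> X"
  have "A \<inter> S \<subseteq> S" "A - T \<subseteq> X" using A by blast+
  then have "f (A \<inter> S) = f (A \<inter> S \<inter> T) + f (A \<inter> S - T)"
    and "f (A - T) = f ((A - T) \<inter> S) + f (A - T - S)"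
    using separatorD[OF T] separatorD[OF S] by blast+
  moreover have "A \<inter> S \<inter> T = A \<inter> T" "(A - T) \<inter> S = A \<inter> S - T" "A - T - S = A - S"
    using \<open>T \<subseteq> S\<close> by blast+
  ultimately show "f A = f (A \<inter> T) + f (A - T)" using separatorD[OF S A] by simp
qed

lemma separator_cong:
  assumes "\<And>A. A \<subseteq> X \<Longrightarrow> f A = g A" shows "separator X f S \<longleftrightarrow> separator X g S"
proof -
  have "A \<inter> S \<subseteq> X" "A - S \<subseteq> X" if "A \<subseteq> X" for A using that by blast+
  then show ?thesis unfolding separator_def using assms by (metis (no_types, lifting))
qed

lemma atoms_cong:
  assumes "\<And>A. A \<subseteq> X \<Longrightarrow> f A = g A" shows "atoms X f = atoms X g"
  unfolding atoms_def using separator_cong[of X f g, OF assms] by simp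

lemma atoms_subset: "C \<in> atoms X f \<Longrightarrow> C \<subseteq> X"
  unfolding atoms_def using separator_subset by blast

lemma atom_separator_cases:
  assumes C: "C \<in> atoms X f" and S: "separator X f S" shows "C \<subseteq> S \<or> C \<inter> S = {}"
proof -
  have "separator X f (C \<inter> S)" using C S separator_Int unfolding atoms_def by blast
  then have "C \<inter> S = {} \<or> C \<inter> S = C" using C unfolding atoms_def by blast
  then show ?thesis by blast
qed

lemma atoms_eqI:
  assumes C: "C \<in> atoms X f" and D: "D \<in> atoms X f" and "x \<in> C" "x \<in> D" shows "C = D"
  using atom_separator_cases[OF C] atom_separator_cases[OF D] assms unfolding atoms_def by blast

lemma atom_exists:
  assumes "finite X" "f {} = 0" "x \<in> X" obtains C where "C \<in> atoms X f" "x \<in> C"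
proof -
  let ?P = "\<lambda>S. separator X f S \<and> x \<in> S"
  obtain S where S: "?P S" and min: "\<And>S'. ?P S' \<Longrightarrow> card S \<le> card S'"
    using ex_has_least_nat[of ?P X card] separator_top[of f X, OF \<open>f {} = 0\<close>] \<open>x \<in> X\<close> by blast
  have "finite S" using separator_subset[of X f S] S \<open>finite X\<close> finite_subset by blast
  have "T = {} \<or> T = S" if T: "separator X f T" "T \<subseteq> S" for T
  proof (cases "x \<in> T")
    case True
    then show ?thesis using min T card_seteq[OF \<open>finite S\<close> T(2)] by blast
  next
    case False
    \<comment> \<open>\<open>S - T\<close> is a separator containing \<open>x\<close>, so minimality of \<open>S\<close> forces \<open>T = {}\<close>\<close>
    have "?P (S \<inter> (X - T))" using separator_Int[OF _ separator_Diff[OF T(1)]] S False \<open>x \<in> X\<close> by blast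
    then have "S \<inter> (X - T) = S" using min card_seteq[OF \<open>finite S\<close>, of "S \<inter> (X - T)"] by blast
    then show ?thesis using T(2) by blast
  qed
  then have "S \<in> atoms X f" using S unfolding atoms_def by blast
  then show ?thesis using S that by blast
qed

lemma atoms_of_separator:
  assumes S: "separator X f S" and "C \<subseteq> S" shows "C \<in> atoms X f \<longleftrightarrow> C \<in> atoms S f"
proof
  assume C: "C \<in> atoms X f"
  have "separator S f C"
    using separator_restrict[of X f C S] C S \<open>C \<subseteq> S\<close> separator_subset[OF S]
    unfolding atoms_def by (simp add: Int_absorb2)
  moreover have "T = {} \<or> T = C" if "separator S f T" "T \<subseteq> C" for T
    using separator_trans[OF that(1) S] that C unfolding atoms_def by blast
  ultimately show "C \<in> atoms S f" using C unfolding atoms_def by blast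
next
  assume C: "C \<in> atoms S f"
  have "separator X f C" using separator_trans[OF _ S] C unfolding atoms_def by blast
  moreover have "T = {} \<or> T = C" if T: "separator X f T" "T \<subseteq> C" for T
  proof -
    have "separator S f (T \<inter> S)" using separator_restrict[OF T(1) separator_subset[OF S]] .
    moreover have "T \<inter> S = T" using T(2) \<open>C \<subseteq> S\<close> by blast
    ultimately show ?thesis using C T(2) unfolding atoms_def by auto
  qed
  ultimately show "C \<in> atoms X f" using C unfolding atoms_def by blast
qed

lemma partition_on_atoms:
  assumes "finite X" "f {} = 0" shows "partition_on X (atoms X f)"
proof (rule partition_onI)
  show "\<Union>(atoms X f) = X" using atoms_subset atom_exists[of X f, OF assms] by blast
  show "disjnt C D" if "C \<in> atoms X f" "D \<in> atoms X f" "C \<noteq> D" for C D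
    using atoms_eqI[of C X f D] that unfolding disjnt_def by blast
  show "{} \<notin> atoms X f" unfolding atoms_def by blast
qed

lemma sum_over_disjoint_separators:
  assumes "finite P" "disjoint P" "\<And>C. C \<in> P \<Longrightarrow> separator X f C" "f {} = 0" "A \<subseteq> \<Union>P" "A \<subseteq> X"
  shows "f A = (\<Sum>C\<in>P. f (A \<inter> C))"
  using assms
proof (induction P arbitrary: A rule: finite_induct)
  case (insert C P)
  have "disjoint P" and disj: "\<And>D. D \<in> P \<Longrightarrow> C \<inter> D = {}"
    using insert.prems(1) insert.hyps(2) unfolding pairwise_insert disjnt_def by auto
  have "A - C \<subseteq> \<Union>P" "A - C \<subseteq> X" using insert.prems(4,5) by auto
  then have "f (A - C) = (\<Sum>D\<in>P. f ((A - C) \<inter> D))"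
    using insert.IH[OF \<open>disjoint P\<close> _ insert.prems(3)] insert.prems(2) by blast
  also have "\<dots> = (\<Sum>D\<in>P. f (A \<inter> D))"
  proof (rule sum.cong)
    show "f ((A - C) \<inter> D) = f (A \<inter> D)" if "D \<in> P" for D
      using disj[OF that] by (metis Diff_Int_distrib2 Diff_empty Int_commute)
  qed simp
  finally show ?case
    using separatorD[OF insert.prems(2)[of C]] insert.prems(5) insert.hyps by simp
qed simp

lemma sum_over_atoms:
  assumes "finite X" "f {} = 0" "A \<subseteq> X" shows "f A = (\<Sum>C\<in>atoms X f. f (A \<inter> C))"
proof (rule sum_over_disjoint_separators)
  have P: "partition_on X (atoms X f)" using partition_on_atoms[of X f] assms by blast
  show "finite (atoms X f)" using finite_elements[OF _ P] \<open>finite X\<close> .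
  show "disjoint (atoms X f)" using partition_onD2[OF P] .
  show "A \<subseteq> \<Union>(atoms X f)" using partition_onD1[OF P] \<open>A \<subseteq> X\<close> by simp
qed (use assms in \<open>auto simp: atoms_def\<close>)

lemma separator_class:
  assumes r: "equiv X r" and decomp: "\<And>A. A \<subseteq> X \<Longrightarrow> f A = (\<Sum>Y\<in>X//r. f (A \<inter> Y))"
    and "f {} = 0" and D: "D \<in> X//r"
  shows "separator X f D"
proof (rule separatorI)
  show "D \<subseteq> X" using in_quotient_imp_subset[OF r D] .
  fix A assume "A \<subseteq> X"
  have "f (A \<inter> Y) = f (A \<inter> D \<inter> Y) + f ((A - D) \<inter> Y)" if Y: "Y \<in> X//r" for Y
  proof -
    consider "A \<inter> D \<inter> Y = A \<inter> Y" "(A - D) \<inter> Y = {}" | "A \<inter> D \<inter> Y = {}" "(A - D) \<inter> Y = A \<inter> Y"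
      using quotient_disj[OF r D Y] by blast
    then show ?thesis using \<open>f {} = 0\<close> by cases simp_all
  qed
  then have "f A = (\<Sum>Y\<in>X//r. f (A \<inter> D \<inter> Y)) + (\<Sum>Y\<in>X//r. f ((A - D) \<inter> Y))"
    using decomp[OF \<open>A \<subseteq> X\<close>] by (simp add: sum.distrib)
  moreover have "A \<inter> D \<subseteq> X" "A - D \<subseteq> X" using \<open>A \<subseteq> X\<close> by blast+
  ultimately show "f A = f (A \<inter> D) + f (A - D)" using decomp by simp
qed

section \<open>The indecomposable components are the atoms\<close>

lemma Bool_restr: "f {} = 0 \<Longrightarrow> Bool Y (restr f Y)"
  by (simp add: Bool_def restr_def)

lemma restr_eq_star1_separator:
  assumes C: "separator D f C" shows "restr f D = star1 (D - C) C (restr f (D - C)) (restr f C)"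
proof
  fix A
  have U: "(D - C) \<union> C = D" using separator_subset[OF C] by blast
  show "restr f D A = star1 (D - C) C (restr f (D - C)) (restr f C) A"
  proof (cases "A \<subseteq> D")
    case True
    then have "A \<inter> (D - C) = A - C" by blast
    then show ?thesis using separatorD[OF C True] True unfolding restr_def star1_def U by auto
  qed (unfold restr_def star1_def U, simp)
qed

lemma separator_if_restr_eq_star1:
  assumes "T \<subseteq> C" "Bool (C - T) f'" "Bool T f''" and split: "restr f C = star1 (C - T) T f' f''"
  shows "separator C f T"
proof (rule separatorI)
  have U: "(C - T) \<union> T = C" using \<open>T \<subseteq> C\<close> by blast
  have f: "f B = f' (B \<inter> (C - T)) + f'' (B \<inter> T)" if "B \<subseteq> C" for B
    using fun_cong[OF split, of B] that unfolding restr_def star1_def U by simp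
  have "f' {} = 0" "f'' {} = 0" using assms(2,3) unfolding Bool_def by auto
  fix A assume "A \<subseteq> C"
  moreover have "A \<inter> T \<subseteq> C" "A - T \<subseteq> C" "A \<inter> T \<inter> (C - T) = {}" "A \<inter> T \<inter> T = A \<inter> T"
    "(A - T) \<inter> (C - T) = A \<inter> (C - T)" "(A - T) \<inter> T = {}" using \<open>A \<subseteq> C\<close> by blast+
  ultimately show "f A = f (A \<inter> T) + f (A - T)"
    using f[of A] f[of "A \<inter> T"] f[of "A - T"] \<open>f' {} = 0\<close> \<open>f'' {} = 0\<close> by auto
qed (rule \<open>T \<subseteq> C\<close>)

lemma indecomposable_restr_iff:
  assumes "f {} = 0" shows "indecomposable C (restr f C) \<longleftrightarrow> C \<in> atoms C f"
proof
  assume "indecomposable C (restr f C)"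
  then have "C \<noteq> {}" and split_trivial: "\<And>T f' f''. T \<subseteq> C \<Longrightarrow> Bool (C - T) f' \<Longrightarrow> Bool T f'' \<Longrightarrow>
      restr f C = star1 (C - T) T f' f'' \<Longrightarrow> T = {} \<or> T = C"
    unfolding indecomposable_def by blast+
  have "T = {} \<or> T = C" if T: "separator C f T" for T
    by (rule split_trivial[OF separator_subset[OF T] Bool_restr Bool_restr restr_eq_star1_separator[OF T]])
      (use assms in simp_all)
  then show "C \<in> atoms C f"
    using separator_top[of f C, OF assms] \<open>C \<noteq> {}\<close> unfolding atoms_def by blast
next
  assume C: "C \<in> atoms C f"
  show "indecomposable C (restr f C)" unfolding indecomposable_def
  proof (intro conjI allI impI)
    show "C \<noteq> {}" using C unfolding atoms_def by blast
    fix T f' f'' assume "T \<subseteq> C \<and> Bool (C - T) f' \<and> Bool T f'' \<and> restr f C = star1 (C - T) T f' f''"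
    then have "separator C f T" using separator_if_restr_eq_star1 by blast
    then show "T = {} \<or> T = C" using C \<open>T \<subseteq> C \<and> _\<close> unfolding atoms_def by blast
  qed
qed

lemma atom_iff_indecomposable_separator:
  assumes "separator X f C" "f {} = 0" shows "C \<in> atoms X f \<longleftrightarrow> indecomposable C (restr f C)"
  using atoms_of_separator[OF assms(1)] indecomposable_restr_iff[of f C, OF assms(2)] by blast

lemma ic_rel_eq:
  assumes "finite X" "f {} = 0"
  shows "ic_rel X f = {(x, y). \<exists>C\<in>atoms X f. x \<in> C \<and> y \<in> C}" (is "_ = ?R")
  unfolding ic_rel_def
proof (rule the_equality)
  have P: "partition_on X (atoms X f)" using partition_on_atoms[of X f] assms by blast
  have Q: "X // ?R = atoms X f" using partition_on_eq_quotient[OF P] .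
  have "indecomposable C (restr f C)" if "C \<in> atoms X f" for C
    using that atom_iff_indecomposable_separator[of X f C] assms(2) unfolding atoms_def by blast
  then show "equiv X ?R \<and> (\<forall>A. A \<subseteq> X \<longrightarrow> f A = (\<Sum>Y\<in>X // ?R. f (A \<inter> Y))) \<and>
      (\<forall>Y\<in>X // ?R. indecomposable Y (restr f Y))"
    unfolding Q using equiv_partition_on[OF P] sum_over_atoms[of X f, OF assms] by blast
  fix r assume r: "equiv X r \<and> (\<forall>A. A \<subseteq> X \<longrightarrow> f A = (\<Sum>Y\<in>X // r. f (A \<inter> Y))) \<and>
      (\<forall>Y\<in>X // r. indecomposable Y (restr f Y))"
  have "Y \<in> atoms X f" if "Y \<in> X // r" for Y
    using that r separator_class[of X r f Y] atom_iff_indecomposable_separator[of X f Y] assms(2) by blast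
  then have "X // r = atoms X f" using partition_on_eqI[OF partition_on_quotient P] r by blast
  then show "r = ?R" using equiv_eq_rel_of_quotient[of X r] r by simp
qed

lemma ic_components_eq_atoms:
  assumes "finite X" "f {} = 0" shows "ic_components X f = atoms X f"
  unfolding ic_components_def ic_rel_eq[of X f, OF assms]
  using partition_on_eq_quotient[OF partition_on_atoms[of X f, OF assms]] .

lemma rigid_indec_cong:
  assumes fg: "\<And>A. A \<subseteq> C \<Longrightarrow> f A = g A" shows "rigid_indec C f \<longleftrightarrow> rigid_indec C g"
proof -
  have additive: "f (A \<union> B) = f A + f B \<longleftrightarrow> g (A \<union> B) = g A + g B" if "A \<subseteq> C" "B \<subseteq> C" for A B
    using that fg[of A] fg[of B] fg[of "A \<union> B"] by simp
  have "A' \<subseteq> C" if "A' \<subseteq> A" "A \<subseteq> C" for A A' using that by blast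
  then show ?thesis unfolding rigid_indec_def by (smt (verit) additive)
qed

lemma rigid_indec_mono: "rigid_indec C f \<Longrightarrow> W \<subseteq> C \<Longrightarrow> rigid_indec W f"
  unfolding rigid_indec_def by (meson subset_trans)

lemma rigid_iff_atoms:
  assumes "finite X" "f {} = 0" shows "rigid X f \<longleftrightarrow> (\<forall>C\<in>atoms X f. rigid_indec C f)"
  unfolding rigid_def ic_components_eq_atoms[of X f, OF assms]
  using rigid_indec_cong[of _ "restr f _" f] by (simp add: restr_def)

lemma rigid_cong:
  assumes "finite X" "f {} = 0" and fg: "\<And>A. A \<subseteq> X \<Longrightarrow> f A = g A"
  shows "rigid X f \<longleftrightarrow> rigid X g"
proof -
  have "g {} = 0" using fg[of "{}"] \<open>f {} = 0\<close> by simp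
  have "rigid_indec C f \<longleftrightarrow> rigid_indec C g" if "C \<in> atoms X f" for C
    using rigid_indec_cong fg atoms_subset[OF that] by (metis subset_trans)
  then show ?thesis
    using rigid_iff_atoms[of X f] rigid_iff_atoms[of X g] atoms_cong[of X f g] assms \<open>g {} = 0\<close> by auto
qed

lemma rigid_subset:
  assumes "finite X" "f {} = 0" "rigid X f" "Y \<subseteq> X" shows "rigid Y f"
proof -
  have rigid_atoms: "\<forall>C\<in>atoms X f. rigid_indec C f"
    using rigid_iff_atoms[of X f, OF assms(1,2)] assms(3) by (rule iffD1)
  have "rigid_indec W f" if W: "W \<in> atoms Y f" for W
  proof -
    obtain x where "x \<in> W" using W unfolding atoms_def by blast
    then have "x \<in> X" using atoms_subset[OF W] \<open>Y \<subseteq> X\<close> by blast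
    then obtain C where C: "C \<in> atoms X f" "x \<in> C" using atom_exists[of X f] assms(1,2) by metis
    have "separator Y f (C \<inter> Y)"
      using separator_restrict[of X f C Y] \<open>Y \<subseteq> X\<close> C(1) unfolding atoms_def by blast
    then have "W \<subseteq> C \<inter> Y \<or> W \<inter> (C \<inter> Y) = {}" by (rule atom_separator_cases[OF W])
    then have "W \<subseteq> C" using \<open>x \<in> W\<close> C(2) atoms_subset[OF W] by blast
    then show ?thesis using rigid_indec_mono rigid_atoms C(1) by blast
  qed
  moreover have "finite Y" using finite_subset[OF \<open>Y \<subseteq> X\<close> \<open>finite X\<close>] .
  ultimately show ?thesis using rigid_iff_atoms[of Y f] \<open>f {} = 0\<close> by blast
qed

lemma rigid_restr:
  assumes "finite X" "f {} = 0" "rigid X f" "Y \<subseteq> X" shows "rigid Y (restr f Y)"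
  using rigid_subset[of X f Y, OF assms] rigid_cong[of Y f "restr f Y"] finite_subset[OF assms(4,1)]
    assms(2) by (simp add: restr_def)

lemma atoms_separator_Un:
  assumes S: "separator X f S" shows "atoms X f = atoms S f \<union> atoms (X - S) f"
proof (intro equalityI subsetI)
  fix C assume C: "C \<in> atoms X f"
  then have "C \<subseteq> S \<or> C \<subseteq> X - S" using atom_separator_cases[OF C S] atoms_subset[OF C] by blast
  then show "C \<in> atoms S f \<union> atoms (X - S) f"
    using atoms_of_separator[OF S, of C] atoms_of_separator[OF separator_Diff[OF S], of C] C by blast
next
  fix C assume "C \<in> atoms S f \<union> atoms (X - S) f"
  then show "C \<in> atoms X f"
    using atoms_of_separator[OF S, of C] atoms_of_separator[OF separator_Diff[OF S], of C] atoms_subset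
    by blast
qed

lemma rigid_separator_iff:
  assumes "finite X" "f {} = 0" and S: "separator X f S"
  shows "rigid X f \<longleftrightarrow> rigid S f \<and> rigid (X - S) f"
proof -
  have "finite S" using finite_subset[OF separator_subset[OF S] \<open>finite X\<close>] .
  have "rigid X f \<longleftrightarrow> (\<forall>C\<in>atoms X f. rigid_indec C f)" by (rule rigid_iff_atoms[of X f, OF assms(1,2)])
  also have "\<dots> \<longleftrightarrow> (\<forall>C\<in>atoms S f. rigid_indec C f) \<and> (\<forall>C\<in>atoms (X - S) f. rigid_indec C f)"
    unfolding atoms_separator_Un[OF S] by blast
  also have "\<dots> \<longleftrightarrow> rigid S f \<and> rigid (X - S) f"
    using rigid_iff_atoms[of S f] rigid_iff_atoms[of "X - S" f] \<open>finite S\<close> assms(1,2) by simp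
  finally show ?thesis .
qed

lemma rigid_star1_iff:
  assumes "finite X" "finite Y" "X \<inter> Y = {}" "f {} = 0" "g {} = 0"
  shows "rigid (X \<union> Y) (star1 X Y f g) \<longleftrightarrow> rigid X f \<and> rigid Y g"
proof -
  let ?h = "star1 X Y f g"
  have hX: "?h A = f A" if "A \<subseteq> X" for A
  proof -
    have "A \<inter> X = A" "A \<inter> Y = {}" using that \<open>X \<inter> Y = {}\<close> by blast+
    then show ?thesis using that \<open>g {} = 0\<close> unfolding star1_def by auto
  qed
  have hY: "?h A = g A" if "A \<subseteq> Y" for A
  proof -
    have "A \<inter> Y = A" "A \<inter> X = {}" using that \<open>X \<inter> Y = {}\<close> by blast+
    then show ?thesis using that \<open>f {} = 0\<close> unfolding star1_def by auto
  qed
  have "separator (X \<union> Y) ?h X"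
  proof (rule separatorI)
    fix A assume "A \<subseteq> X \<union> Y"
    moreover have "A - X \<subseteq> Y" "A - X = A \<inter> Y" using \<open>A \<subseteq> X \<union> Y\<close> \<open>X \<inter> Y = {}\<close> by blast+
    ultimately show "?h A = ?h (A \<inter> X) + ?h (A - X)"
      using hX[of "A \<inter> X"] hY[of "A - X"] unfolding star1_def by simp
  qed simp
  moreover have "X \<union> Y - X = Y" using \<open>X \<inter> Y = {}\<close> by blast
  moreover have "?h {} = 0" using hX[of "{}"] \<open>f {} = 0\<close> by simp
  ultimately have "rigid (X \<union> Y) ?h \<longleftrightarrow> rigid X ?h \<and> rigid Y ?h"
    using rigid_separator_iff[of "X \<union> Y" ?h X] assms(1,2) by simp
  also have "\<dots> \<longleftrightarrow> rigid X f \<and> rigid Y g"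
    using rigid_cong[of X ?h f] rigid_cong[of Y ?h g] hX hY \<open>?h {} = 0\<close> assms(1,2) by simp
  finally show ?thesis .
qed

section \<open>Quotients\<close>

lemma bar_fun_eq_on_class:
  assumes "finite X" and r: "equiv X r" and "f {} = 0" and Y: "Y \<in> X//r" and "A \<subseteq> Y"
  shows "bar_fun X f r A = f A"
proof -
  have "f (A \<inter> Y') = (if Y' = Y then f A else 0)" if Y': "Y' \<in> X//r" for Y'
  proof -
    consider "Y' = Y" "A \<inter> Y' = A" | "Y' \<noteq> Y" "A \<inter> Y' = {}"
      using quotient_disj[OF r Y Y'] \<open>A \<subseteq> Y\<close> by blast
    then show ?thesis using \<open>f {} = 0\<close> by cases simp_all
  qed
  moreover have "A \<subseteq> X" using in_quotient_imp_subset[OF r Y] \<open>A \<subseteq> Y\<close> by blast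
  ultimately show ?thesis
    using finite_quotient[OF \<open>finite X\<close> equiv_type[OF r]] Y unfolding bar_fun_def by simp
qed

lemma separator_bar_fun_class:
  assumes "finite X" and r: "equiv X r" and "f {} = 0" and D: "D \<in> X//r"
  shows "separator X (bar_fun X f r) D"
proof (rule separator_class[OF r _ _ D])
  fix A assume "A \<subseteq> X"
  then have "bar_fun X f r A = (\<Sum>Y\<in>X//r. f (A \<inter> Y))" by (simp add: bar_fun_def)
  also have "\<dots> = (\<Sum>Y\<in>X//r. bar_fun X f r (A \<inter> Y))"
    using bar_fun_eq_on_class[of X r f, OF assms(1) r \<open>f {} = 0\<close>] by (simp add: Int_lower2)
  finally show "bar_fun X f r A = (\<Sum>Y\<in>X//r. bar_fun X f r (A \<inter> Y))" .
qed (simp add: bar_fun_def \<open>f {} = 0\<close>)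

lemma separator_bar_fun:
  assumes r: "equiv X r" and S: "separator X f S" shows "separator X (bar_fun X f r) S"
proof (rule separatorI)
  show "S \<subseteq> X" using separator_subset[OF S] .
  fix A assume "A \<subseteq> X"
  have "f (A \<inter> Y) = f (A \<inter> S \<inter> Y) + f ((A - S) \<inter> Y)" if "Y \<in> X//r" for Y
  proof -
    have "A \<inter> Y \<subseteq> X" using \<open>A \<subseteq> X\<close> by blast
    moreover have "A \<inter> Y \<inter> S = A \<inter> S \<inter> Y" "A \<inter> Y - S = (A - S) \<inter> Y" by blast+
    ultimately show ?thesis using separatorD[OF S] by metis
  qed
  moreover have "A \<inter> S \<subseteq> X" "A - S \<subseteq> X" using \<open>A \<subseteq> X\<close> by blast+
  ultimately show "bar_fun X f r A = bar_fun X f r (A \<inter> S) + bar_fun X f r (A - S)"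
    using \<open>A \<subseteq> X\<close> unfolding bar_fun_def by (simp add: sum.distrib)
qed

lemma EW_quotient_eq_atoms:
  assumes "finite X" "f {} = 0" "r \<in> EW X f" shows "X//r = atoms X (bar_fun X f r)"
proof -
  let ?g = "bar_fun X f r"
  have r: "equiv X r" and card: "ic X ?g = cl X r" using \<open>r \<in> EW X f\<close> unfolding EW_def by auto
  have "?g {} = 0" using \<open>f {} = 0\<close> unfolding bar_fun_def by simp
  have class_separator: "separator X ?g D" if "D \<in> X//r" for D
    using separator_bar_fun_class[of X r f, OF assms(1) r \<open>f {} = 0\<close> that] .
  have "ic_rel X ?g \<subseteq> r"
  proof
    fix p assume "p \<in> ic_rel X ?g"
    then obtain x y C where p: "p = (x, y)" and C: "C \<in> atoms X ?g" "x \<in> C" "y \<in> C"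
      unfolding ic_rel_eq[of X ?g, OF assms(1) \<open>?g {} = 0\<close>] by blast
    have "x \<in> X" using atoms_subset[OF C(1)] C(2) by blast
    then have "r``{x} \<in> X//r" "x \<in> r``{x}" using quotientI equiv_class_self[OF r] by auto
    then have "C \<subseteq> r``{x}" using atom_separator_cases[OF C(1) class_separator] C(2) by blast
    then show "p \<in> r" using C(3) p by blast
  qed
  moreover have "equiv X (ic_rel X ?g)"
    unfolding ic_rel_eq[of X ?g, OF assms(1) \<open>?g {} = 0\<close>]
    using equiv_partition_on[OF partition_on_atoms[of X ?g, OF assms(1) \<open>?g {} = 0\<close>]] .
  moreover have "card (X//r) = card (X // ic_rel X ?g)"
    using card unfolding ic_def cl_def ic_components_def by simp
  ultimately have "ic_rel X ?g = r" using equiv_eq_if_refines_card_eq[OF assms(1) _ r] by blast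
  then show ?thesis using ic_components_eq_atoms[of X ?g] assms(1) \<open>?g {} = 0\<close>
    unfolding ic_components_def by simp
qed

lemma EW_separator_saturated:
  assumes "finite X" "f {} = 0" "r \<in> EW X f" "separator X f S" "Y \<in> X//r"
  shows "Y \<subseteq> S \<or> Y \<inter> S = {}"
proof -
  have "equiv X r" using \<open>r \<in> EW X f\<close> unfolding EW_def by blast
  have "Y \<in> atoms X (bar_fun X f r)" using EW_quotient_eq_atoms[of X f r] assms by blast
  then show ?thesis
    using atom_separator_cases separator_bar_fun[OF \<open>equiv X r\<close> \<open>separator X f S\<close>] by blast
qed

lemma quot_fun_eq: "A \<subseteq> X//r \<Longrightarrow> quot_fun X f r A = f (\<Union>A)"
  by (simp add: quot_fun_def)

lemma separator_quot_fun:
  assumes r: "equiv X r" and S: "separator X f S"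
    and saturated: "\<And>Y. Y \<in> X//r \<Longrightarrow> Y \<subseteq> S \<or> Y \<inter> S = {}"
  shows "separator (X//r) (quot_fun X f r) {Y \<in> X//r. Y \<subseteq> S}"
proof (rule separatorI)
  fix A assume A: "A \<subseteq> X//r"
  have "\<Union>A \<subseteq> X" using A in_quotient_imp_subset[OF r] by blast
  moreover have "\<Union>A \<inter> S = \<Union>(A \<inter> {Y \<in> X//r. Y \<subseteq> S})" "\<Union>A - S = \<Union>(A - {Y \<in> X//r. Y \<subseteq> S})"
    using A saturated by blast+
  ultimately show "quot_fun X f r A =
      quot_fun X f r (A \<inter> {Y \<in> X//r. Y \<subseteq> S}) + quot_fun X f r (A - {Y \<in> X//r. Y \<subseteq> S})"
    using A separatorD[OF S] by (simp add: quot_fun_eq le_infI1 subset_trans[OF Diff_subset A])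
qed blast

lemma rigid_indec_quot_fun:
  assumes r: "equiv X r" and "Z \<subseteq> X//r" and rigid: "rigid_indec (\<Union>Z) f"
  shows "rigid_indec Z (quot_fun X f r)"
  unfolding rigid_indec_def
proof (intro allI impI, elim conjE)
  fix A B A' B' assume "A \<subseteq> Z" "B \<subseteq> Z" "A \<inter> B = {}" "A' \<subseteq> A" "B' \<subseteq> B"
    and additive: "quot_fun X f r (A \<union> B) = quot_fun X f r A + quot_fun X f r B"
  have classes: "A \<subseteq> X//r" "B \<subseteq> X//r" "A' \<subseteq> X//r" "B' \<subseteq> X//r"
    using \<open>A \<subseteq> Z\<close> \<open>B \<subseteq> Z\<close> \<open>A' \<subseteq> A\<close> \<open>B' \<subseteq> B\<close> \<open>Z \<subseteq> X//r\<close> by blast+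
  have "\<Union>A \<inter> \<Union>B = {}"
    using quotient_disj[OF r] \<open>A \<subseteq> Z\<close> \<open>B \<subseteq> Z\<close> \<open>Z \<subseteq> X//r\<close> \<open>A \<inter> B = {}\<close> by blast
  moreover have "f (\<Union>A \<union> \<Union>B) = f (\<Union>A) + f (\<Union>B)"
    using additive classes by (simp add: quot_fun_eq)
  ultimately have "f (\<Union>A' \<union> \<Union>B') = f (\<Union>A') + f (\<Union>B')"
    using rigid \<open>A \<subseteq> Z\<close> \<open>B \<subseteq> Z\<close> \<open>A' \<subseteq> A\<close> \<open>B' \<subseteq> B\<close> unfolding rigid_indec_def
    by (meson Sup_subset_mono)
  then show "quot_fun X f r (A' \<union> B') = quot_fun X f r A' + quot_fun X f r B'"
    using classes by (simp add: quot_fun_eq)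
qed

lemma rigid_quot_fun:
  assumes "finite X" "f {} = 0" "rigid X f" "r \<in> EW X f"
  shows "rigid (X//r) (quot_fun X f r)"
proof -
  let ?F = "quot_fun X f r"
  have r: "equiv X r" using \<open>r \<in> EW X f\<close> unfolding EW_def by blast
  have "finite (X//r)" using finite_quotient[OF \<open>finite X\<close> equiv_type[OF r]] .
  have "?F {} = 0" using \<open>f {} = 0\<close> by (simp add: quot_fun_def)
  have rigid_atoms: "\<forall>C\<in>atoms X f. rigid_indec C f"
    using rigid_iff_atoms[of X f, OF assms(1,2)] assms(3) by (rule iffD1)
  have "rigid_indec Z ?F" if Z: "Z \<in> atoms (X//r) ?F" for Z
  proof -
    obtain Y where "Y \<in> Z" using Z unfolding atoms_def by blast
    then have Y: "Y \<in> X//r" using atoms_subset[OF Z] by blast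
    then obtain y where "y \<in> Y" using in_quotient_imp_non_empty[OF r] by blast
    then have "y \<in> X" using in_quotient_imp_subset[OF r Y] by blast
    then obtain C where C: "C \<in> atoms X f" "y \<in> C" using atom_exists[of X f] assms(1,2) by metis
    have C_sep: "separator X f C" using C(1) unfolding atoms_def by blast
    have saturated: "Y' \<subseteq> C \<or> Y' \<inter> C = {}" if "Y' \<in> X//r" for Y'
      using EW_separator_saturated[of X f r C Y'] assms(1,2,4) C_sep that by blast
    have "Y \<in> {Y' \<in> X//r. Y' \<subseteq> C}" using saturated[OF Y] Y \<open>y \<in> Y\<close> C(2) by blast
    then have "Z \<subseteq> {Y' \<in> X//r. Y' \<subseteq> C}"
      using atom_separator_cases[OF Z separator_quot_fun[OF r C_sep saturated]] \<open>Y \<in> Z\<close> by blast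
    then have "\<Union>Z \<subseteq> C" by blast
    then have "rigid_indec (\<Union>Z) f" using rigid_indec_mono rigid_atoms C(1) by blast
    then show ?thesis using rigid_indec_quot_fun[OF r atoms_subset[OF Z]] by blast
  qed
  then show ?thesis using rigid_iff_atoms[of "X//r" ?F, OF \<open>finite (X//r)\<close> \<open>?F {} = 0\<close>] by blast
qed

theorem lemma4p11:
  shows "(\<forall>X Y (f :: 'a set \<Rightarrow> int) g.
            finite X \<and> finite Y \<and> X \<inter> Y = {} \<and> Bool X f \<and> Bool Y g \<longrightarrow>
            (rigid (X \<union> Y) (star1 X Y f g) \<longleftrightarrow> rigid X f \<and> rigid Y g))
       \<and> (\<forall>X Y (f :: 'a set \<Rightarrow> int).
            finite X \<and> Bool X f \<and> rigid X f \<and> Y \<subseteq> X \<longrightarrow> rigid Y (restr f Y))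
       \<and> (\<forall>X (f :: 'a set \<Rightarrow> int) r.
            finite X \<and> Bool X f \<and> rigid X f \<and> r \<in> EW X f \<longrightarrow>
            rigid (X // r) (quot_fun X f r))"
proof (intro conjI allI impI; elim conjE)
  fix X Y :: "'a set" and f g :: "'a set \<Rightarrow> int"
  assume "finite X" "finite Y" "X \<inter> Y = {}" "Bool X f" "Bool Y g"
  then show "rigid (X \<union> Y) (star1 X Y f g) \<longleftrightarrow> rigid X f \<and> rigid Y g"
    using rigid_star1_iff[of X Y f g] by (simp add: Bool_def)
next
  fix X Y :: "'a set" and f :: "'a set \<Rightarrow> int"
  assume "finite X" "Bool X f" "rigid X f" "Y \<subseteq> X"
  then show "rigid Y (restr f Y)" using rigid_restr[of X f Y] by (simp add: Bool_def)
next
  fix X :: "'a set" and f :: "'a set \<Rightarrow> int" and r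
  assume "finite X" "Bool X f" "rigid X f" "r \<in> EW X f"
  then show "rigid (X // r) (quot_fun X f r)" using rigid_quot_fun[of X f r] by (simp add: Bool_def)
qed

end
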